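(* For every $0<p<3$ and every $q\ge0$ there exists $C(p,q)>0$ such that $$\int_{\mathbb R^3}|G(v,v')|^p\frac{dv'}{(1+|v'-u_1|)^q}\le\frac{C(p,q)}{(1+|v-u_1|)^{q+1}}\qquad\text{for all }v\in\mathbb R^3.$$
   Context: Fix masses $m,m_1>0$, a constant restitution coefficient $\epsilon\in(0,1)$, a bulk velocity $u_1\in\mathbb R^3$ and a temperature $\vartheta_1>0$. Set $\alpha=\frac{m_1}{m+m_1}$, $\beta=\frac{1-\epsilon}{2}$, $\mu=\frac{1-2\alpha(1-\beta)}{\alpha(1-\beta)}$ (so $1+\mu>0$), and $G(v,v')=\big(\frac{m_1}{2\pi\vartheta_1}\big)^{1/2}|v-v'|^{-1}\exp\big\{-\frac{m_1}{8\vartheta_1}\big((1+\mu)^2|v-v'|^2+\frac{(|v-u_1|^2-|v'-u_1|^2)^2}{|v-v'|^2}\big)\big\}$ for $v\neq v'$. *)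

theory Defs
  imports "HOL-Analysis.Analysis"
begin

definition alpha_c :: "real \<Rightarrow> real \<Rightarrow> real" where
  "alpha_c m m1 = m1 / (m + m1)"

definition beta_c :: "real \<Rightarrow> real" where
  "beta_c \<epsilon> = (1 - \<epsilon>) / 2"

definition mu_c :: "real \<Rightarrow> real \<Rightarrow> real \<Rightarrow> real" where
  "mu_c m m1 \<epsilon> =
     (1 - 2 * alpha_c m m1 * (1 - beta_c \<epsilon>)) / (alpha_c m m1 * (1 - beta_c \<epsilon>))"

text \<open>The kernel G(v,v'); it is only defined for v \<noteq> v' in the paper, we set it to 0 on
  the (null) diagonal.\<close>
definition G_kernel :: "real \<Rightarrow> real \<Rightarrow> real \<Rightarrow> real^3 \<Rightarrow> real \<Rightarrow> real^3 \<Rightarrow> real^3 \<Rightarrow> real" where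
  "G_kernel m m1 \<epsilon> u1 \<theta>1 v v' =
    (if v = v' then 0 else
     sqrt (m1 / (2 * pi * \<theta>1)) / norm (v - v') *
     exp (- (m1 / (8 * \<theta>1)) *
          ((1 + mu_c m m1 \<epsilon>)\<^sup>2 * (norm (v - v'))\<^sup>2
           + ((norm (v - u1))\<^sup>2 - (norm (v' - u1))\<^sup>2)\<^sup>2 / (norm (v - v'))\<^sup>2)))"

end

theory Submission
  imports Defs "HOL-Real_Asymp.Real_Asymp"
begin

text \<open>
  Write X = |v - u1|^2 - |v' - u1|^2 for the energy gap and s = |v - v'|. Up to a constant,
  |G|^p = s^(-p) exp(-a s^2) w^2 with the weight w = exp(-b X^2 / s^2), and the two factors w
  play different roles.

  One of them trades (1 + |v' - u1|)^(-q) for (1 + |v - u1|)^(-q): either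
  |v' - u1| >= |v - u1| / 2, or the gap is so large that w <= exp(-b |v - u1|^2 / 4), which
  absorbs any power of 1 + |v - u1|.

  The other one yields the extra factor (1 + |v - u1|)^(-1). In the ball of radius R around v,
  the points with |X| <= K lie in a slab of width (2K + R^2) / (2 |v - u1|) orthogonal to
  v - u1; sorting the ball into the layers j <= |X| / s < j + 1 bounds the integral of w over
  the ball by C (R^3 + R^4) / |v - u1|, besides the trivial C R^3. Covering the radial profile
  s^(-p) exp(-a s^2) by balls of radii 2^(-n) (summable as p < 3) and n + 2 (summable thanks
  to the Gaussian) turns this into C min(1, 1 / |v - u1|). In dimension d the same argument
  only needs p < d.
\<close>

section \<open>Series\<close>

lemma summable_of_bigo_inverse_square:
  fixes f :: "nat \<Rightarrow> real"
  assumes "f \<in> O(\<lambda>n. 1 / real n ^ 2)"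
  shows "summable f"
  by (rule summable_comparison_test_bigo[OF _ assms]) (simp add: inverse_eq_divide[symmetric] inverse_power_summable)

lemma summable_unit_step_radii:
  assumes "a > 0"
  shows "summable (\<lambda>n. exp (- a * real (n + 1)) * ((real n + 2) ^ d + (real n + 2) ^ (d + 1)))"
  by (rule summable_of_bigo_inverse_square) (use assms in real_asymp)

lemma summable_gaussian_moment:
  assumes "b > 0"
  shows "summable (\<lambda>j. (real j + 1) * exp (- b * (real j)\<^sup>2))"
  by (rule summable_of_bigo_inverse_square) (use assms in real_asymp)

lemma summable_dyadic_power:
  assumes "p < real k"
  shows "summable (\<lambda>n. (2 powr p) ^ (n + 1) * ((1 / 2) ^ n) ^ k)"
proof -
  have "2 powr p * (1 / 2) ^ k < (1::real)"
    using powr_less_mono[OF assms, of 2] by (simp add: powr_realpow power_one_over field_simps)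
  then have "summable (\<lambda>n. 2 powr p * (2 powr p * (1 / 2) ^ k) ^ n)"
    by (intro summable_mult summable_geometric) simp
  then show ?thesis
    by (simp add: power_mult_distrib power_mult[symmetric] mult.commute mult.left_commute)
qed

lemma summable_dyadic_radii:
  assumes "p < real d"
  shows "summable (\<lambda>n. (2 powr p) ^ (n + 1) * (((1 / 2) ^ n) ^ d + ((1 / 2) ^ n) ^ (d + 1)))"
  using summable_add[OF summable_dyadic_power[of p d] summable_dyadic_power[of p "d + 1"]] assms
  by (simp add: distrib_left)

lemma ennreal_le_suminf: "(f :: nat \<Rightarrow> ennreal) n \<le> suminf f"
  using sum_le_suminf[of f "{n}"] by simp

lemma ennreal_cmult_le:
  assumes "X \<le> ennreal Y" and "0 \<le> c"
  shows "ennreal c * X \<le> ennreal (c * Y)"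
  using mult_left_mono[OF assms(1), of "ennreal c"] assms(2) by (simp add: ennreal_mult')

lemma nn_integral_suminf_le:
  assumes "\<And>n. f n \<in> borel_measurable M" and "\<And>n. (\<integral>\<^sup>+x. f n x \<partial>M) \<le> ennreal (u n)"
    and "\<And>n. 0 \<le> u n" and "summable u"
  shows "(\<integral>\<^sup>+x. (\<Sum>n. f n x) \<partial>M) \<le> ennreal (\<Sum>n. u n)"
proof -
  have "(\<integral>\<^sup>+x. (\<Sum>n. f n x) \<partial>M) = (\<Sum>n. \<integral>\<^sup>+x. f n x \<partial>M)"
    using assms(1) by (rule nn_integral_suminf)
  also have "\<dots> \<le> (\<Sum>n. ennreal (u n))"
    using assms(2) by (rule suminf_le) auto
  also have "\<dots> = ennreal (\<Sum>n. u n)"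
    using assms(3,4) by (rule suminf_ennreal2)
  finally show ?thesis .
qed

lemma cball_sets_lborel [measurable]: "cball (v :: 'a::euclidean_space) r \<in> sets lborel"
  by simp

section \<open>Slabs inside balls\<close>

lemma emeasure_le_content_rigid_box:
  fixes f :: "real^'n::{finite,wellorder} \<Rightarrow> real^'n::{finite,wellorder}"
  assumes f: "orthogonal_transformation f" and E: "E \<subseteq> (\<lambda>z. v + f z) ` cbox l u"
  shows "emeasure lborel E \<le> ennreal (measure lborel (cbox l u))"
proof -
  define S where "S = (+) v ` f ` cbox l u"
  have fB: "f ` cbox l u \<in> lmeasurable" "measure lebesgue (f ` cbox l u) = measure lborel (cbox l u)"
    using measurable_orthogonal_image[OF f] measure_orthogonal_image[OF f] by auto
  have "continuous_on UNIV f"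
    using f orthogonal_transformation_linear linear_continuous_on linear_conv_bounded_linear by blast
  then have "compact S"
    unfolding S_def by (intro compact_translation compact_continuous_image) (auto intro: continuous_on_subset)
  then have S: "S \<in> sets lborel"
    by (simp add: borel_compact)
  have "emeasure lborel E \<le> emeasure lborel S"
    using E by (intro emeasure_mono S) (auto simp: S_def)
  also have "\<dots> = emeasure lebesgue S"
    using S by (simp add: emeasure_completion)
  also have "\<dots> = ennreal (measure lborel (cbox l u))"
    using measurable_translation[OF fB(1)] by (simp add: S_def emeasure_eq_measure2 measure_translation fB(2))
  finally show ?thesis .
qed

lemma norm_sq_in_rotated_frame:
  fixes v c :: "real^'n::finite" and f :: "real^'n \<Rightarrow> real^'n"
  assumes f: "orthogonal_transformation f" and fk: "f (axis k (1::real)) = (1 / norm (v - c)) *\<^sub>R (v - c)"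
    and vc: "v \<noteq> c"
  shows "(norm (v + f z - c))\<^sup>2 = (norm (v - c))\<^sup>2 + 2 * norm (v - c) * z $ k + (norm z)\<^sup>2"
proof -
  have "v - c = norm (v - c) *\<^sub>R f (axis k 1)"
    using fk vc by simp
  then have "(v - c) \<bullet> f z = norm (v - c) * (f (axis k 1) \<bullet> f z)"
    by (metis inner_scaleR_left)
  also have "f (axis k 1) \<bullet> f z = z $ k"
    using f by (simp add: orthogonal_transformation_def inner_axis')
  finally have "(v - c) \<bullet> f z = norm (v - c) * z $ k" .
  moreover have "f z \<bullet> f z = z \<bullet> z"
    using f by (simp add: orthogonal_transformation_def)
  moreover have "v + f z - c = (v - c) + f z"
    by simp
  ultimately show ?thesis
    by (simp only: power2_norm_eq_inner inner_add_left inner_add_right inner_commute)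
qed

lemma energy_slab_subset_rotated_box:
  fixes v c :: "real^'n::finite" and f :: "real^'n \<Rightarrow> real^'n"
  assumes f: "orthogonal_transformation f"
    and fk: "f (axis k (1::real)) = (1 / norm (v - c)) *\<^sub>R (v - c)" and vc: "v \<noteq> c"
  defines "t \<equiv> norm (v - c)"
  shows "{y \<in> cball v R. \<bar>(norm (v - c))\<^sup>2 - (norm (y - c))\<^sup>2\<bar> \<le> K}
           \<subseteq> (\<lambda>z. v + f z) ` cbox (\<chi> i. if i = k then - (K + R\<^sup>2) / (2 * t) else - R)
                                   (\<chi> i. if i = k then K / (2 * t) else R)"
proof safe
  fix y assume y: "y \<in> cball v R" "\<bar>(norm (v - c))\<^sup>2 - (norm (y - c))\<^sup>2\<bar> \<le> K"
  have t: "t > 0"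
    using vc by (simp add: t_def)
  obtain z where "f z = y - v"
    using orthogonal_transformation_surj[OF f] by (metis surjD)
  then have z: "y = v + f z"
    by simp
  have zR: "norm z \<le> R"
    using y(1) z f by (simp add: dist_norm orthogonal_transformation_norm)
  have "\<bar>2 * t * z $ k + (norm z)\<^sup>2\<bar> \<le> K"
    using y(2) norm_sq_in_rotated_frame[OF f fk vc, of z] by (simp add: z t_def)
  moreover have "(norm z)\<^sup>2 \<le> R\<^sup>2"
    using zR by (simp add: power_mono)
  ultimately have "- (K + R\<^sup>2) \<le> 2 * t * z $ k" "2 * t * z $ k \<le> K"
    using zero_le_power2[of "norm z"] unfolding abs_le_iff by linarith+
  then have "- (K + R\<^sup>2) / (2 * t) \<le> z $ k" "z $ k \<le> K / (2 * t)"
    using t by (simp_all add: field_simps)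
  moreover have "- R \<le> z $ i \<and> z $ i \<le> R" for i
    using component_le_norm_cart[of z i] zR by (auto simp: abs_le_iff)
  ultimately have "z \<in> cbox (\<chi> i. if i = k then - (K + R\<^sup>2) / (2 * t) else - R)
                            (\<chi> i. if i = k then K / (2 * t) else R)"
    by (auto simp: mem_box_cart)
  then show "y \<in> (\<lambda>z. v + f z) ` cbox (\<chi> i. if i = k then - (K + R\<^sup>2) / (2 * t) else - R)
                                      (\<chi> i. if i = k then K / (2 * t) else R)"
    using z by blast
qed

lemma emeasure_energy_slab_le:
  fixes v c :: "real^'n::{finite,wellorder}"
  assumes R: "R > 0" and K: "K \<ge> 0" and vc: "v \<noteq> c"
  shows "emeasure lborel {y \<in> cball v R. \<bar>(norm (v - c))\<^sup>2 - (norm (y - c))\<^sup>2\<bar> \<le> K}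
           \<le> ennreal ((2 * K + R\<^sup>2) / (2 * norm (v - c)) * (2 * R) ^ (CARD('n) - 1))"
proof -
  fix k :: 'n \<comment> \<open>any coordinate axis can be rotated onto the direction of \<open>v - c\<close>\<close>
  define t where "t = norm (v - c)"
  define l where "l = (\<chi> i. if i = k then - (K + R\<^sup>2) / (2 * t) else - R)"
  define u where "u = (\<chi> i. if i = k then K / (2 * t) else R)"
  have t: "t > 0"
    using vc by (simp add: t_def)
  have "norm ((1 / t) *\<^sub>R (v - c)) = 1"
    using t by (simp add: t_def)
  then obtain f where f: "orthogonal_transformation f" and "f (axis k (1::real)) = (1 / t) *\<^sub>R (v - c)"
    using orthogonal_transformation_exists_1[OF norm_axis_1] by blast
  then have "{y \<in> cball v R. \<bar>(norm (v - c))\<^sup>2 - (norm (y - c))\<^sup>2\<bar> \<le> K} \<subseteq> (\<lambda>z. v + f z) ` cbox l u"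
    unfolding l_def u_def t_def using vc by (intro energy_slab_subset_rotated_box) auto
  then have "emeasure lborel {y \<in> cball v R. \<bar>(norm (v - c))\<^sup>2 - (norm (y - c))\<^sup>2\<bar> \<le> K}
      \<le> ennreal (measure lborel (cbox l u))"
    by (rule emeasure_le_content_rigid_box[OF f])
  also have "measure lborel (cbox l u) = (2 * K + R\<^sup>2) / (2 * t) * (2 * R) ^ (CARD('n) - 1)"
  proof -
    have "l \<in> cbox l u"
      using t R K by (auto simp: mem_box_cart l_def u_def field_simps)
    then have "measure lborel (cbox l u) = (\<Prod>i\<in>UNIV. u $ i - l $ i)"
      by (intro content_cbox_cart) blast
    also have "\<dots> = (u $ k - l $ k) * (\<Prod>i\<in>UNIV - {k}. u $ i - l $ i)"
      by (simp add: prod.remove)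
    also have "\<dots> = (2 * K + R\<^sup>2) / (2 * t) * (2 * R) ^ (CARD('n) - 1)"
      using t by (simp add: l_def u_def card_Diff_singleton field_simps)
    finally show ?thesis .
  qed
  finally show ?thesis
    by (simp add: t_def)
qed

lemma emeasure_energy_layer_le:
  fixes v c :: "real^'n::{finite,wellorder}"
  assumes R: "R > 0" and vc: "v \<noteq> c"
  shows "emeasure lborel {y \<in> cball v R. \<bar>(norm (v - c))\<^sup>2 - (norm (y - c))\<^sup>2\<bar> \<le> (real j + 1) * R}
           \<le> ennreal ((real j + 1) * (2 ^ (CARD('n) - 1) / norm (v - c) * (R ^ CARD('n) + R ^ (CARD('n) + 1))))"
proof -
  define t where "t = norm (v - c)"
  have t: "t > 0"
    using vc by (simp add: t_def)
  obtain d where d: "CARD('n) = Suc d"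
    using zero_less_card_finite gr0_implies_Suc by blast
  have "emeasure lborel {y \<in> cball v R. \<bar>(norm (v - c))\<^sup>2 - (norm (y - c))\<^sup>2\<bar> \<le> (real j + 1) * R}
      \<le> ennreal ((2 * ((real j + 1) * R) + R\<^sup>2) / (2 * t) * (2 * R) ^ d)"
    using emeasure_energy_slab_le[of R "(real j + 1) * R" v c] R vc by (simp add: t_def d)
  also have "\<dots> \<le> ennreal (2 * (real j + 1) * (R + R\<^sup>2) / (2 * t) * (2 * R) ^ d)"
  proof (intro ennreal_leI mult_right_mono divide_right_mono)
    show "2 * ((real j + 1) * R) + R\<^sup>2 \<le> 2 * (real j + 1) * (R + R\<^sup>2)"
      using mult_right_mono[of 1 "2 * (real j + 1)" "R\<^sup>2"] by (simp add: algebra_simps)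
  qed (use R t in auto)
  also have "2 * (real j + 1) * (R + R\<^sup>2) / (2 * t) * (2 * R) ^ d
      = (real j + 1) * (2 ^ (CARD('n) - 1) / t * (R ^ CARD('n) + R ^ (CARD('n) + 1)))"
    using t by (simp add: d power_mult_distrib power2_eq_square field_simps)
  finally show ?thesis
    by (simp add: t_def)
qed

section \<open>The energy-gap weight\<close>

definition energy_gap_weight :: "real \<Rightarrow> 'a::real_normed_vector \<Rightarrow> 'a \<Rightarrow> 'a \<Rightarrow> real" where
  "energy_gap_weight b c v y =
     exp (- b * ((norm (v - c))\<^sup>2 - (norm (y - c))\<^sup>2)\<^sup>2 / (norm (v - y))\<^sup>2)"

lemma energy_gap_weight_borel_measurable [measurable]:
  "energy_gap_weight b c (v :: 'a::euclidean_space) \<in> borel_measurable lborel"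
  unfolding energy_gap_weight_def by measurable

lemma energy_gap_weight_le_1: "b \<ge> 0 \<Longrightarrow> energy_gap_weight b c v y \<le> 1"
  by (simp add: energy_gap_weight_def)

lemma nn_integral_cball_energy_gap_weight_le_volume:
  fixes v c :: "'a::euclidean_space"
  assumes R: "R \<ge> 0" and b: "b \<ge> 0"
  shows "(\<integral>\<^sup>+y. indicator (cball v R) y * ennreal (energy_gap_weight b c v y) \<partial>lborel)
           \<le> ennreal (unit_ball_vol DIM('a) * R ^ DIM('a))"
proof -
  have "(\<integral>\<^sup>+y. indicator (cball v R) y * ennreal (energy_gap_weight b c v y) \<partial>lborel)
      \<le> (\<integral>\<^sup>+y. indicator (cball v R) y \<partial>lborel)"
    by (intro nn_integral_mono) (simp add: indicator_def energy_gap_weight_le_1 b)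
  also have "\<dots> = emeasure lborel (cball v R)"
    by simp
  also have "\<dots> = ennreal (unit_ball_vol DIM('a) * R ^ DIM('a))"
    by (rule emeasure_cball[OF R])
  finally show ?thesis .
qed

lemma energy_gap_weight_le_layer:
  assumes vy: "norm (v - y) \<le> R" and b: "b \<ge> 0"
  obtains j :: nat where "energy_gap_weight b c v y \<le> exp (- b * (real j)\<^sup>2)"
    and "\<bar>(norm (v - c))\<^sup>2 - (norm (y - c))\<^sup>2\<bar> \<le> (real j + 1) * R"
proof
  define X where "X = (norm (v - c))\<^sup>2 - (norm (y - c))\<^sup>2"
  define z where "z = \<bar>X\<bar> / norm (v - y)"
  define j where "j = nat \<lfloor>z\<rfloor>"
  have "z \<ge> 0"
    by (simp add: z_def)
  then have j: "real j \<le> z" "z < real j + 1"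
    by (simp_all add: j_def of_nat_nat real_of_int_floor_add_one_gt)
  have "energy_gap_weight b c v y = exp (- b * z\<^sup>2)"
    by (simp add: energy_gap_weight_def z_def X_def power_divide)
  also have "\<dots> \<le> exp (- b * (real j)\<^sup>2)"
    using j b \<open>z \<ge> 0\<close> by (simp add: mult_left_mono power_mono)
  finally show "energy_gap_weight b c v y \<le> exp (- b * (real j)\<^sup>2)" .
  show "\<bar>X\<bar> \<le> (real j + 1) * R"
  proof (cases "y = v")
    case False
    then have "\<bar>X\<bar> = z * norm (v - y)"
      by (simp add: z_def)
    also have "\<dots> \<le> (real j + 1) * R"
      using j vy \<open>z \<ge> 0\<close> by (intro mult_mono) auto
    finally show ?thesis .
  qed (use vy in \<open>simp add: X_def\<close>)
qed

lemma nn_integral_cball_energy_gap_weight_le_slabs: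
  fixes v c :: "real^'n::{finite,wellorder}"
  assumes R: "R > 0" and b: "b > 0" and vc: "v \<noteq> c"
  shows "(\<integral>\<^sup>+y. indicator (cball v R) y * ennreal (energy_gap_weight b c v y) \<partial>lborel)
           \<le> ennreal ((\<Sum>j. (real j + 1) * exp (- b * (real j)\<^sup>2)) * 2 ^ (CARD('n) - 1) / norm (v - c)
                       * (R ^ CARD('n) + R ^ (CARD('n) + 1)))"
proof -
  define e where "e j = exp (- b * (real j)\<^sup>2)" for j :: nat
  define E where "E j = {y \<in> cball v R. \<bar>(norm (v - c))\<^sup>2 - (norm (y - c))\<^sup>2\<bar> \<le> (real j + 1) * R}"
    for j :: nat
  define M where "M = 2 ^ (CARD('n) - 1) / norm (v - c) * (R ^ CARD('n) + R ^ (CARD('n) + 1))"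
  have E [measurable]: "E j \<in> sets lborel" for j
    unfolding E_def by measurable
  have M: "M \<ge> 0"
    using R by (simp add: M_def)
  have layers: "indicator (cball v R) y * ennreal (energy_gap_weight b c v y)
      \<le> (\<Sum>j. ennreal (e j) * indicator (E j) y)" for y
  proof (cases "y \<in> cball v R")
    case True
    then obtain j where "energy_gap_weight b c v y \<le> e j" "y \<in> E j"
      using energy_gap_weight_le_layer[of v y R b c] b by (auto simp: e_def E_def dist_norm)
    then have "indicator (cball v R) y * ennreal (energy_gap_weight b c v y) \<le> ennreal (e j) * indicator (E j) y"
      using True by (simp add: ennreal_leI)
    also have "\<dots> \<le> (\<Sum>j. ennreal (e j) * indicator (E j) y)"
      by (rule ennreal_le_suminf)
    finally show ?thesis .
  qed simp
  have "(\<integral>\<^sup>+y. indicator (cball v R) y * ennreal (energy_gap_weight b c v y) \<partial>lborel)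
      \<le> (\<integral>\<^sup>+y. (\<Sum>j. ennreal (e j) * indicator (E j) y) \<partial>lborel)"
    by (intro nn_integral_mono layers)
  also have "\<dots> \<le> ennreal (\<Sum>j. e j * ((real j + 1) * M))"
  proof (rule nn_integral_suminf_le)
    show "(\<integral>\<^sup>+y. ennreal (e j) * indicator (E j) y \<partial>lborel) \<le> ennreal (e j * ((real j + 1) * M))" for j
      using ennreal_cmult_le[OF emeasure_energy_layer_le[OF R vc, of j], of "e j"]
      by (simp add: nn_integral_cmult_indicator e_def E_def M_def)
    show "summable (\<lambda>j. e j * ((real j + 1) * M))"
      using summable_mult2[OF summable_gaussian_moment[OF b], of M] by (simp add: e_def mult_ac)
  qed (use M in \<open>auto simp: e_def\<close>)
  also have "(\<Sum>j. e j * ((real j + 1) * M)) = (\<Sum>j. (real j + 1) * e j) * M"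
    using suminf_mult[OF summable_gaussian_moment[OF b], of M] by (simp add: e_def mult_ac)
  finally show ?thesis
    by (simp add: e_def M_def mult.assoc)
qed

section \<open>The reduced kernel\<close>

text \<open>Since \<open>0 powr _ = 0\<close>, the kernel vanishes on the diagonal \<open>y = v\<close>.\<close>

definition reduced_kernel :: "real \<Rightarrow> real \<Rightarrow> real \<Rightarrow> 'a::real_normed_vector \<Rightarrow> 'a \<Rightarrow> 'a \<Rightarrow> real" where
  "reduced_kernel a b p c v y =
     norm (v - y) powr (- p) * exp (- a * (norm (v - y))\<^sup>2) * energy_gap_weight b c v y"

lemma reduced_kernel_borel_measurable [measurable]:
  "reduced_kernel a b p c (v :: 'a::euclidean_space) \<in> borel_measurable lborel"
  unfolding reduced_kernel_def by measurable

lemma reduced_kernel_nonneg: "reduced_kernel a b p c v y \<ge> 0"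
  by (simp add: reduced_kernel_def energy_gap_weight_def)

lemma half_power_powr_neg: "((1 / 2) ^ m) powr (- p) = (2 powr p) ^ m" for p :: real
proof -
  have "(1 / 2 :: real) ^ m = inverse (2 powr real m)"
    by (simp add: powr_realpow power_one_over inverse_eq_divide)
  then have "((1 / 2) ^ m) powr (- p) = 2 powr (real m * p)"
    by (simp add: inverse_powr powr_minus powr_powr)
  also have "\<dots> = (2 powr p) ^ m"
    by (simp add: powr_power mult.commute)
  finally show ?thesis .
qed

lemma radial_profile_le_dyadic:
  fixes s a p :: real
  assumes s: "0 < s" "s \<le> 1" and a: "0 \<le> a" and p: "0 \<le> p"
  obtains n :: nat where "s \<le> (1 / 2) ^ n" "s powr (- p) * exp (- a * s\<^sup>2) \<le> (2 powr p) ^ (n + 1)"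
proof -
  obtain N where "(1 / 2) ^ N < s"
    using real_arch_pow_inv[of s "1 / 2"] s by auto
  then obtain n where n: "\<not> (1 / 2) ^ n < s" "(1 / 2) ^ Suc n < s"
    using ex_least_nat_less[of "\<lambda>i. (1 / 2) ^ i < s" N] s by auto
  have "s powr (- p) * exp (- a * s\<^sup>2) \<le> s powr (- p)"
    using a by (simp add: mult_left_le)
  also have "\<dots> \<le> ((1 / 2) ^ Suc n) powr (- p)"
    using n p by (intro powr_mono2') auto
  also have "\<dots> = (2 powr p) ^ (n + 1)"
    by (simp only: half_power_powr_neg Suc_eq_plus1)
  finally have "s powr (- p) * exp (- a * s\<^sup>2) \<le> (2 powr p) ^ (n + 1)" .
  moreover have "s \<le> (1 / 2) ^ n"
    using n(1) by simp
  ultimately show ?thesis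
    using that by blast
qed

lemma radial_profile_le_unit_step:
  fixes s a p :: real
  assumes s: "1 < s" and a: "0 \<le> a" and p: "0 \<le> p"
  obtains n :: nat where "s \<le> real n + 2" "s powr (- p) * exp (- a * s\<^sup>2) \<le> exp (- a * real (n + 1))"
proof
  define n where "n = nat (\<lfloor>s\<rfloor> - 1)"
  have "real n + 1 = of_int \<lfloor>s\<rfloor>"
    using s by (simp add: n_def)
  then have n: "real n + 1 \<le> s" "s < real n + 2"
    using real_of_int_floor_add_one_gt[of s] by linarith+
  then show "s \<le> real n + 2"
    by simp
  have "s \<le> s\<^sup>2"
    using s by (intro self_le_power) auto
  then have "real (n + 1) \<le> s\<^sup>2"
    using n by simp
  then have "exp (- a * s\<^sup>2) \<le> exp (- a * real (n + 1))"
    using a by (simp add: mult_left_mono)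
  moreover have "s powr (- p) \<le> 1"
    using powr_mono2'[of "- p" 1 s] s p by simp
  ultimately show "s powr (- p) * exp (- a * s\<^sup>2) \<le> exp (- a * real (n + 1))"
    using mult_mono[of "s powr (- p)" 1] by fastforce
qed

lemma reduced_kernel_le_series:
  assumes a: "0 \<le> a" and p: "0 \<le> p"
  shows "ennreal (reduced_kernel a b p c v y)
    \<le> (\<Sum>n. ennreal ((2 powr p) ^ (n + 1)) * indicator (cball v ((1 / 2) ^ n)) y
               * ennreal (energy_gap_weight b c v y))
      + (\<Sum>n. ennreal (exp (- a * real (n + 1))) * indicator (cball v (real n + 2)) y
               * ennreal (energy_gap_weight b c v y))"
    (is "_ \<le> ?dyadic + ?steps")
proof (cases "y = v")
  case False
  define s where "s = norm (v - y)"
  define w where "w = energy_gap_weight b c v y"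
  have s: "s > 0"
    using False by (simp add: s_def)
  have w: "w \<ge> 0"
    by (simp add: w_def energy_gap_weight_def)
  have kernel: "reduced_kernel a b p c v y = s powr (- p) * exp (- a * s\<^sup>2) * w"
    by (simp add: reduced_kernel_def s_def w_def)
  show ?thesis
  proof (cases "s \<le> 1")
    case True
    then obtain n where "s \<le> (1 / 2) ^ n" "s powr (- p) * exp (- a * s\<^sup>2) \<le> (2 powr p) ^ (n + 1)"
      using radial_profile_le_dyadic s a p by blast
    then have "ennreal (reduced_kernel a b p c v y)
        \<le> ennreal ((2 powr p) ^ (n + 1)) * indicator (cball v ((1 / 2) ^ n)) y * ennreal w"
      using w by (simp add: kernel s_def dist_norm ennreal_mult'[symmetric] ennreal_leI mult_right_mono)
    also have "\<dots> \<le> ?dyadic"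
      unfolding w_def by (rule ennreal_le_suminf)
    finally show ?thesis
      by (rule add_increasing2[OF zero_le])
  next
    case False
    then obtain n where "s \<le> real n + 2" "s powr (- p) * exp (- a * s\<^sup>2) \<le> exp (- a * real (n + 1))"
      using radial_profile_le_unit_step a p by (metis not_le)
    then have "ennreal (reduced_kernel a b p c v y)
        \<le> ennreal (exp (- a * real (n + 1))) * indicator (cball v (real n + 2)) y * ennreal w"
      using w by (simp add: kernel s_def dist_norm ennreal_mult'[symmetric] ennreal_leI mult_right_mono)
    also have "\<dots> \<le> ?steps"
      unfolding w_def by (rule ennreal_le_suminf)
    finally show ?thesis
      by (rule add_increasing[OF zero_le])
  qed
qed (simp add: reduced_kernel_def)

definition reduced_kernel_constant :: "real \<Rightarrow> real \<Rightarrow> nat \<Rightarrow> real" where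
  "reduced_kernel_constant a p d =
     (\<Sum>n. (2 powr p) ^ (n + 1) * (((1 / 2) ^ n) ^ d + ((1 / 2) ^ n) ^ (d + 1)))
     + (\<Sum>n. exp (- a * real (n + 1)) * ((real n + 2) ^ d + (real n + 2) ^ (d + 1)))"

lemma reduced_kernel_constant_nonneg:
  assumes "0 < a" "p < real d"
  shows "0 \<le> reduced_kernel_constant a p d"
  unfolding reduced_kernel_constant_def
  using assms by (intro add_nonneg_nonneg suminf_nonneg summable_dyadic_radii summable_unit_step_radii) auto

lemma nn_integral_suminf_cball_le:
  fixes v c :: "'a::euclidean_space" and b \<kappa> :: real
  assumes \<kappa>: "0 \<le> \<kappa>"
    and balls: "\<And>R. 0 < R \<Longrightarrow>
      (\<integral>\<^sup>+y. indicator (cball v R) y * ennreal (energy_gap_weight b c v y) \<partial>lborel)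
        \<le> ennreal (\<kappa> * (R ^ DIM('a) + R ^ (DIM('a) + 1)))"
    and \<gamma>: "\<And>n. 0 \<le> \<gamma> n" and r: "\<And>n. 0 < r n"
    and summable: "summable (\<lambda>n. \<gamma> n * (r n ^ DIM('a) + r n ^ (DIM('a) + 1)))"
  shows "(\<integral>\<^sup>+y. (\<Sum>n. ennreal (\<gamma> n) * indicator (cball v (r n)) y * ennreal (energy_gap_weight b c v y))
           \<partial>lborel) \<le> ennreal (\<kappa> * (\<Sum>n. \<gamma> n * (r n ^ DIM('a) + r n ^ (DIM('a) + 1))))"
proof -
  have "(\<integral>\<^sup>+y. (\<Sum>n. ennreal (\<gamma> n) * indicator (cball v (r n)) y * ennreal (energy_gap_weight b c v y))
      \<partial>lborel) \<le> ennreal (\<Sum>n. \<gamma> n * (\<kappa> * (r n ^ DIM('a) + r n ^ (DIM('a) + 1))))"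
  proof (rule nn_integral_suminf_le)
    show "(\<integral>\<^sup>+y. ennreal (\<gamma> n) * indicator (cball v (r n)) y * ennreal (energy_gap_weight b c v y) \<partial>lborel)
        \<le> ennreal (\<gamma> n * (\<kappa> * (r n ^ DIM('a) + r n ^ (DIM('a) + 1))))" for n
      using ennreal_cmult_le[OF balls[OF r] \<gamma>, of n n] by (simp add: nn_integral_cmult mult.assoc)
    show "summable (\<lambda>n. \<gamma> n * (\<kappa> * (r n ^ DIM('a) + r n ^ (DIM('a) + 1))))"
      using summable_mult[OF summable, of \<kappa>] by (simp add: mult.left_commute)
  qed (use \<kappa> \<gamma> r in \<open>auto intro!: mult_nonneg_nonneg add_nonneg_nonneg zero_le_power simp: less_imp_le\<close>)
  also have "(\<Sum>n. \<gamma> n * (\<kappa> * (r n ^ DIM('a) + r n ^ (DIM('a) + 1))))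
      = \<kappa> * (\<Sum>n. \<gamma> n * (r n ^ DIM('a) + r n ^ (DIM('a) + 1)))"
    using suminf_mult[OF summable, of \<kappa>] by (simp add: mult.left_commute)
  finally show ?thesis .
qed

lemma nn_integral_reduced_kernel_le:
  fixes v c :: "'a::euclidean_space" and a b p \<kappa> :: real
  assumes a: "0 < a" and p: "0 \<le> p" "p < DIM('a)" and \<kappa>: "0 \<le> \<kappa>"
    and balls: "\<And>R. 0 < R \<Longrightarrow>
      (\<integral>\<^sup>+y. indicator (cball v R) y * ennreal (energy_gap_weight b c v y) \<partial>lborel)
        \<le> ennreal (\<kappa> * (R ^ DIM('a) + R ^ (DIM('a) + 1)))"
  shows "(\<integral>\<^sup>+y. ennreal (reduced_kernel a b p c v y) \<partial>lborel)
           \<le> ennreal (\<kappa> * reduced_kernel_constant a p DIM('a))"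
proof -
  define \<Lambda>\<^sub>1 where "\<Lambda>\<^sub>1 = (\<Sum>n. (2 powr p) ^ (n + 1) * (((1 / 2) ^ n) ^ DIM('a) + ((1 / 2) ^ n) ^ (DIM('a) + 1)))"
  define \<Lambda>\<^sub>2 where "\<Lambda>\<^sub>2 = (\<Sum>n. exp (- a * real (n + 1)) * ((real n + 2) ^ DIM('a) + (real n + 2) ^ (DIM('a) + 1)))"
  have summable: "summable (\<lambda>n. (2 powr p) ^ (n + 1) * (((1 / 2) ^ n) ^ DIM('a) + ((1 / 2) ^ n) ^ (DIM('a) + 1)))"
    "summable (\<lambda>n. exp (- a * real (n + 1)) * ((real n + 2) ^ DIM('a) + (real n + 2) ^ (DIM('a) + 1)))"
    using summable_dyadic_radii[OF p(2)] summable_unit_step_radii[OF a] by auto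
  have "0 \<le> \<Lambda>\<^sub>1" "0 \<le> \<Lambda>\<^sub>2"
    unfolding \<Lambda>\<^sub>1_def \<Lambda>\<^sub>2_def using summable by (auto intro!: suminf_nonneg)
  have "(\<integral>\<^sup>+y. ennreal (reduced_kernel a b p c v y) \<partial>lborel)
      \<le> (\<integral>\<^sup>+y. (\<Sum>n. ennreal ((2 powr p) ^ (n + 1)) * indicator (cball v ((1 / 2) ^ n)) y
                      * ennreal (energy_gap_weight b c v y))
             + (\<Sum>n. ennreal (exp (- a * real (n + 1))) * indicator (cball v (real n + 2)) y
                      * ennreal (energy_gap_weight b c v y)) \<partial>lborel)"
    using a p by (intro nn_integral_mono reduced_kernel_le_series) auto
  also have "\<dots> = (\<integral>\<^sup>+y. (\<Sum>n. ennreal ((2 powr p) ^ (n + 1)) * indicator (cball v ((1 / 2) ^ n)) y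
                              * ennreal (energy_gap_weight b c v y)) \<partial>lborel)
      + (\<integral>\<^sup>+y. (\<Sum>n. ennreal (exp (- a * real (n + 1))) * indicator (cball v (real n + 2)) y
                      * ennreal (energy_gap_weight b c v y)) \<partial>lborel)"
    by (rule nn_integral_add) measurable
  also have "\<dots> \<le> ennreal (\<kappa> * \<Lambda>\<^sub>1) + ennreal (\<kappa> * \<Lambda>\<^sub>2)"
    unfolding \<Lambda>\<^sub>1_def \<Lambda>\<^sub>2_def using summable
    by (intro add_mono nn_integral_suminf_cball_le[OF \<kappa> balls]) auto
  also have "\<dots> = ennreal (\<kappa> * reduced_kernel_constant a p DIM('a))"
    using \<kappa> \<open>0 \<le> \<Lambda>\<^sub>1\<close> \<open>0 \<le> \<Lambda>\<^sub>2\<close>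
    by (simp add: reduced_kernel_constant_def \<Lambda>\<^sub>1_def \<Lambda>\<^sub>2_def distrib_left flip: ennreal_plus)
  finally show ?thesis .
qed

lemma nn_integral_reduced_kernel_le_volume:
  fixes v c :: "'a::euclidean_space" and a b p :: real
  assumes a: "0 < a" and b: "0 \<le> b" and p: "0 \<le> p" "p < DIM('a)"
  shows "(\<integral>\<^sup>+y. ennreal (reduced_kernel a b p c v y) \<partial>lborel)
           \<le> ennreal (unit_ball_vol DIM('a) * reduced_kernel_constant a p DIM('a))"
proof (rule nn_integral_reduced_kernel_le[OF a p])
  fix R :: real assume R: "0 < R"
  have "(\<integral>\<^sup>+y. indicator (cball v R) y * ennreal (energy_gap_weight b c v y) \<partial>lborel)
      \<le> ennreal (unit_ball_vol DIM('a) * R ^ DIM('a))"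
    using R b by (intro nn_integral_cball_energy_gap_weight_le_volume) auto
  also have "\<dots> \<le> ennreal (unit_ball_vol DIM('a) * (R ^ DIM('a) + R ^ (DIM('a) + 1)))"
    using R by (intro ennreal_leI mult_left_mono) auto
  finally show "(\<integral>\<^sup>+y. indicator (cball v R) y * ennreal (energy_gap_weight b c v y) \<partial>lborel)
      \<le> ennreal (unit_ball_vol DIM('a) * (R ^ DIM('a) + R ^ (DIM('a) + 1)))" .
qed simp

lemma nn_integral_reduced_kernel_le_slabs:
  fixes v c :: "real^'n::{finite,wellorder}" and a b p :: real
  assumes a: "0 < a" and b: "0 < b" and p: "0 \<le> p" "p < CARD('n)" and vc: "v \<noteq> c"
  shows "(\<integral>\<^sup>+y. ennreal (reduced_kernel a b p c v y) \<partial>lborel)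
           \<le> ennreal ((\<Sum>j. (real j + 1) * exp (- b * (real j)\<^sup>2)) * 2 ^ (CARD('n) - 1) / norm (v - c)
                       * reduced_kernel_constant a p CARD('n))"
proof -
  define S where "S = (\<Sum>j. (real j + 1) * exp (- b * (real j)\<^sup>2)) * 2 ^ (CARD('n) - 1) / norm (v - c)"
  have "0 \<le> (\<Sum>j. (real j + 1) * exp (- b * (real j)\<^sup>2))"
    using summable_gaussian_moment[OF b] by (intro suminf_nonneg) auto
  then have "0 \<le> S"
    by (simp add: S_def)
  moreover have "(\<integral>\<^sup>+y. indicator (cball v R) y * ennreal (energy_gap_weight b c v y) \<partial>lborel)
      \<le> ennreal (S * (R ^ CARD('n) + R ^ (CARD('n) + 1)))" if "0 < R" for R
    using nn_integral_cball_energy_gap_weight_le_slabs[OF that b vc] by (simp add: S_def)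
  ultimately show ?thesis
    unfolding S_def[symmetric]
    by (rule nn_integral_reduced_kernel_le[where v = v and c = c and b = b,
        unfolded DIM_cart DIM_real mult_1_right, OF a p])
qed

lemma nn_integral_reduced_kernel_decay:
  fixes c :: "real^'n::{finite,wellorder}" and a b p :: real
  assumes a: "0 < a" and b: "0 < b" and p: "0 \<le> p" "p < CARD('n)"
  obtains C where "0 < C"
    and "\<And>v. (\<integral>\<^sup>+y. ennreal (reduced_kernel a b p c v y) \<partial>lborel) \<le> ennreal (C / (1 + norm (v - c)))"
proof
  define \<Lambda> where "\<Lambda> = reduced_kernel_constant a p CARD('n)"
  define V where "V = unit_ball_vol CARD('n)"
  define S where "S = (\<Sum>j. (real j + 1) * exp (- b * (real j)\<^sup>2)) * 2 ^ (CARD('n) - 1)"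
  define C where "C = 2 * (V * \<Lambda>) + 2 * (S * \<Lambda>) + 1"
  have "0 \<le> (\<Sum>j. (real j + 1) * exp (- b * (real j)\<^sup>2))"
    using summable_gaussian_moment[OF b] by (intro suminf_nonneg) auto
  moreover have "0 \<le> \<Lambda>"
    using a p by (simp add: \<Lambda>_def reduced_kernel_constant_nonneg)
  ultimately have "0 \<le> \<Lambda>" "0 \<le> V" "0 \<le> S"
    by (simp_all add: V_def S_def)
  then have nonneg: "0 \<le> V * \<Lambda>" "0 \<le> S * \<Lambda>"
    by simp_all
  then show "0 < C"
    by (simp add: C_def)
  fix v :: "real^'n::{finite,wellorder}"
  define t where "t = norm (v - c)"
  have "(\<integral>\<^sup>+y. ennreal (reduced_kernel a b p c v y) \<partial>lborel) \<le> ennreal (C / (1 + t))"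
  proof (cases "t \<le> 1")
    case True
    have "V * \<Lambda> \<le> C / (1 + t)"
      using True nonneg mult_left_mono[of "1 + t" 2 "V * \<Lambda>"]
      by (simp add: C_def t_def pos_le_divide_eq add_pos_nonneg)
    then show ?thesis
      using nn_integral_reduced_kernel_le_volume[where v = v and c = c and b = b,
          unfolded DIM_cart DIM_real mult_1_right, OF a _ p] b
      by (simp add: \<Lambda>_def V_def mult.commute) (meson ennreal_leI order_trans)
  next
    case False
    then have t: "1 < t" "v \<noteq> c"
      by (auto simp: t_def)
    have "S / t * \<Lambda> \<le> C / (1 + t)"
      using t nonneg mult_left_mono[of "1 + t" "2 * t" "S * \<Lambda>"] mult_nonneg_nonneg[OF nonneg(1), of t]
      by (simp add: C_def field_simps)
    then show ?thesis
      using nn_integral_reduced_kernel_le_slabs[OF a b p t(2)]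
      by (simp add: \<Lambda>_def S_def t_def) (meson ennreal_leI order_trans)
  qed
  then show "(\<integral>\<^sup>+y. ennreal (reduced_kernel a b p c v y) \<partial>lborel) \<le> ennreal (C / (1 + norm (v - c)))"
    by (simp add: t_def)
qed

section \<open>Trading weights against the energy gap\<close>

lemma powr_mult_exp_neg_square_le:
  fixes t q b :: real
  assumes t: "0 \<le> t" and q: "0 \<le> q" and b: "0 < b"
  shows "(1 + t) powr q * exp (- b * t\<^sup>2 / 4) \<le> exp (q\<^sup>2 / b)"
proof -
  have "(1 + t) powr q = exp (q * ln (1 + t))"
    using t by (simp add: powr_def)
  also have "\<dots> \<le> exp (q * t)"
    using ln_add_one_self_le_self[OF t] q by (simp add: mult_left_mono)
  finally have "(1 + t) powr q * exp (- b * t\<^sup>2 / 4) \<le> exp (q * t - b * t\<^sup>2 / 4)"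
    by (simp add: exp_diff divide_inverse[symmetric] exp_minus divide_right_mono)
  also have "q * t - b * t\<^sup>2 / 4 \<le> q\<^sup>2 / b"
  proof -
    have "b * (q * t - b * t\<^sup>2 / 4) = q\<^sup>2 - (q - b * t / 2)\<^sup>2"
      by (simp add: power2_eq_square algebra_simps)
    then show ?thesis
      using b by (simp add: pos_le_divide_eq mult.commute)
  qed
  finally show ?thesis
    by simp
qed

lemma energy_gap_weight_far_le:
  fixes v y c :: "'a::real_normed_vector"
  assumes far: "norm (y - c) < norm (v - c) / 2" and b: "0 \<le> b"
  shows "energy_gap_weight b c v y \<le> exp (- b * (norm (v - c))\<^sup>2 / 4)"
proof -
  define t where "t = norm (v - c)"
  define r where "r = norm (y - c)"
  define s where "s = norm (v - y)"
  have r: "0 \<le> r" "r < t / 2"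
    using far by (simp_all add: r_def t_def)
  have "s \<le> t + r"
    unfolding s_def t_def r_def using norm_triangle_ineq4[of "v - c" "y - c"] by simp
  then have s: "s \<le> 3 / 2 * t"
    using r by simp
  have "y \<noteq> v"
    using r by (auto simp: r_def t_def)
  then have "0 < s"
    by (simp add: s_def)
  have "3 / 4 * t\<^sup>2 \<le> t\<^sup>2 - r\<^sup>2"
    using power_mono[of r "t / 2" 2] r by (simp add: power_divide)
  then have "(3 / 4 * t\<^sup>2)\<^sup>2 \<le> (t\<^sup>2 - r\<^sup>2)\<^sup>2"
    by (intro power_mono) auto
  moreover have "t\<^sup>2 / 4 * s\<^sup>2 \<le> t\<^sup>2 / 4 * (3 / 2 * t)\<^sup>2"
    using s \<open>0 < s\<close> by (intro mult_left_mono power_mono) auto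
  ultimately have "t\<^sup>2 / 4 \<le> (t\<^sup>2 - r\<^sup>2)\<^sup>2 / s\<^sup>2"
    using \<open>0 < s\<close> by (simp add: pos_le_divide_eq power2_eq_square algebra_simps)
  then have "b * (t\<^sup>2 / 4) \<le> b * ((t\<^sup>2 - r\<^sup>2)\<^sup>2 / s\<^sup>2)"
    using b by (rule mult_left_mono)
  then show ?thesis
    by (simp add: energy_gap_weight_def t_def r_def s_def)
qed

lemma energy_gap_weight_mult_powr_le:
  fixes v y c :: "'a::real_normed_vector"
  assumes b: "0 < b" and q: "0 \<le> q"
  shows "energy_gap_weight b c v y * (1 + norm (v - c)) powr q
           \<le> 2 powr q * exp (q\<^sup>2 / b) * (1 + norm (y - c)) powr q"
proof -
  define t where "t = norm (v - c)"
  define r where "r = norm (y - c)"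
  have "energy_gap_weight b c v y * (1 + t) powr q \<le> max (2 powr q * (1 + r) powr q) (exp (q\<^sup>2 / b))"
  proof (cases "r < t / 2")
    case True
    have "energy_gap_weight b c v y * (1 + t) powr q \<le> (1 + t) powr q * exp (- b * t\<^sup>2 / 4)"
      using energy_gap_weight_far_le[of y c v b] True b
      by (subst mult.commute) (intro mult_left_mono, auto simp: r_def t_def)
    also have "\<dots> \<le> exp (q\<^sup>2 / b)"
      using q b by (intro powr_mult_exp_neg_square_le) (auto simp: t_def)
    finally show ?thesis
      by simp
  next
    case False
    have "energy_gap_weight b c v y * (1 + t) powr q \<le> (1 + t) powr q"
      using b by (intro mult_left_le_one_le) (auto simp: energy_gap_weight_def)
    also have "\<dots> \<le> (2 * (1 + r)) powr q"
      using False q by (intro powr_mono2) (auto simp: t_def r_def)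
    also have "\<dots> = 2 powr q * (1 + r) powr q"
      by (rule powr_mult)
    finally show ?thesis
      by simp
  qed
  also have "\<dots> \<le> (2 powr q * (1 + r) powr q) * exp (q\<^sup>2 / b)"
  proof -
    have "1 \<le> 2 powr q" "1 \<le> (1 + r) powr q"
      using q by (simp_all add: r_def ge_one_powr_ge_zero)
    then have "1 \<le> 2 powr q * (1 + r) powr q"
      using mult_mono[of 1 "2 powr q" 1 "(1 + r) powr q"] by simp
    moreover have "1 \<le> exp (q\<^sup>2 / b)"
      using b by simp
    ultimately show ?thesis
      by (auto simp: max_def mult_le_cancel_left1 mult_le_cancel_right1)
  qed
  finally show ?thesis
    by (simp add: t_def r_def mult_ac)
qed

section \<open>The kernel \<open>G\<close>\<close>

lemma one_plus_mu_c_pos: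
  assumes "m > 0" "m1 > 0" "0 < \<epsilon>" "\<epsilon> < 1"
  shows "1 + mu_c m m1 \<epsilon> > 0"
proof -
  define d where "d = alpha_c m m1 * (1 - beta_c \<epsilon>)"
  have "0 < alpha_c m m1" "alpha_c m m1 < 1" "0 < 1 - beta_c \<epsilon>" "1 - beta_c \<epsilon> < 1"
    using assms by (auto simp: alpha_c_def beta_c_def field_simps)
  then have d: "0 < d" "d < 1"
    unfolding d_def using mult_strict_mono[of "alpha_c m m1" 1 "1 - beta_c \<epsilon>" 1] by auto
  have "mu_c m m1 \<epsilon> = (1 - 2 * d) / d"
    by (simp add: mu_c_def d_def mult.assoc)
  then have "1 + mu_c m m1 \<epsilon> = (1 - d) / d"
    using d by (simp add: field_simps)
  then show ?thesis
    using d by simp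
qed

lemma G_kernel_powr_eq:
  fixes v y u1 :: "real^3"
  assumes m1: "m1 > 0" and \<theta>1: "\<theta>1 > 0"
  defines "\<kappa> \<equiv> m1 / (8 * \<theta>1)"
  shows "\<bar>G_kernel m m1 \<epsilon> u1 \<theta>1 v y\<bar> powr p =
    sqrt (m1 / (2 * pi * \<theta>1)) powr p * reduced_kernel (p * \<kappa> * (1 + mu_c m m1 \<epsilon>)\<^sup>2) (p * \<kappa> / 2) p u1 v y
      * energy_gap_weight (p * \<kappa> / 2) u1 v y"
proof (cases "y = v")
  case False
  define c0 where "c0 = sqrt (m1 / (2 * pi * \<theta>1))"
  define s where "s = norm (v - y)"
  define X where "X = (norm (v - u1))\<^sup>2 - (norm (y - u1))\<^sup>2"
  define A where "A = (1 + mu_c m m1 \<epsilon>)\<^sup>2"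
  define E where "E = - \<kappa> * (A * s\<^sup>2 + X\<^sup>2 / s\<^sup>2)"
  have s: "s > 0"
    using False by (simp add: s_def)
  have c0: "c0 > 0"
    using m1 \<theta>1 by (simp add: c0_def)
  have "\<bar>G_kernel m m1 \<epsilon> u1 \<theta>1 v y\<bar> powr p = (c0 / s * exp E) powr p"
    using False c0 s by (simp add: G_kernel_def c0_def s_def E_def \<kappa>_def A_def X_def)
  also have "\<dots> = c0 powr p * s powr (- p) * exp (E * p)"
    using c0 s by (simp add: powr_mult powr_divide exp_powr_real powr_minus divide_inverse inverse_powr)
  also have "exp (E * p) = exp (- (p * \<kappa> * A) * s\<^sup>2) * exp (- (p * \<kappa> / 2) * X\<^sup>2 / s\<^sup>2)
      * exp (- (p * \<kappa> / 2) * X\<^sup>2 / s\<^sup>2)"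
    by (simp add: E_def field_simps flip: exp_add)
  finally show ?thesis
    by (simp add: reduced_kernel_def energy_gap_weight_def c0_def s_def X_def A_def mult_ac)
qed (simp add: G_kernel_def reduced_kernel_def)

lemma G_kernel_powr_weighted_le:
  fixes v y u1 :: "real^3"
  assumes m1: "m1 > 0" and \<theta>1: "\<theta>1 > 0" and p: "p > 0" and q: "q \<ge> 0"
  defines "\<kappa> \<equiv> m1 / (8 * \<theta>1)"
  shows "\<bar>G_kernel m m1 \<epsilon> u1 \<theta>1 v y\<bar> powr p / (1 + norm (y - u1)) powr q
    \<le> sqrt (m1 / (2 * pi * \<theta>1)) powr p * 2 powr q * exp (q\<^sup>2 / (p * \<kappa> / 2)) / (1 + norm (v - u1)) powr q
        * reduced_kernel (p * \<kappa> * (1 + mu_c m m1 \<epsilon>)\<^sup>2) (p * \<kappa> / 2) p u1 v y"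
proof -
  define b where "b = p * \<kappa> / 2"
  define D where "D = 2 powr q * exp (q\<^sup>2 / b)"
  define K where "K = sqrt (m1 / (2 * pi * \<theta>1)) powr p * reduced_kernel (p * \<kappa> * (1 + mu_c m m1 \<epsilon>)\<^sup>2) b p u1 v y"
  have b: "b > 0"
    using m1 \<theta>1 p by (simp add: b_def \<kappa>_def)
  have K: "K \<ge> 0"
    by (simp add: K_def reduced_kernel_nonneg)
  have "1 + norm (v - u1) > 0" "1 + norm (y - u1) > 0"
    by (simp_all add: add_pos_nonneg)
  then have pos: "(1 + norm (v - u1)) powr q > 0" "(1 + norm (y - u1)) powr q > 0"
    "1 + norm (v - u1) \<noteq> 0" "1 + norm (y - u1) \<noteq> 0"
    by simp_all
  have "energy_gap_weight b u1 v y / (1 + norm (y - u1)) powr q \<le> D / (1 + norm (v - u1)) powr q"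
    using energy_gap_weight_mult_powr_le[OF b q, of u1 v y] pos by (simp add: D_def divide_simps mult_ac)
  then have "K * (energy_gap_weight b u1 v y / (1 + norm (y - u1)) powr q) \<le> K * (D / (1 + norm (v - u1)) powr q)"
    using K by (rule mult_left_mono)
  then show ?thesis
    using G_kernel_powr_eq[OF m1 \<theta>1, of m \<epsilon> u1 v y p]
    by (simp add: K_def D_def b_def \<kappa>_def mult_ac)
qed

lemma nn_integral_G_kernel_weighted_le:
  fixes v u1 :: "real^3"
  assumes m1: "m1 > 0" and \<theta>1: "\<theta>1 > 0" and p: "p > 0" and q: "q \<ge> 0"
  defines "\<kappa> \<equiv> m1 / (8 * \<theta>1)"
  shows "(\<integral>\<^sup>+y. ennreal (\<bar>G_kernel m m1 \<epsilon> u1 \<theta>1 v y\<bar> powr p / (1 + norm (y - u1)) powr q) \<partial>lborel)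
    \<le> ennreal (sqrt (m1 / (2 * pi * \<theta>1)) powr p * 2 powr q * exp (q\<^sup>2 / (p * \<kappa> / 2)) / (1 + norm (v - u1)) powr q)
      * (\<integral>\<^sup>+y. ennreal (reduced_kernel (p * \<kappa> * (1 + mu_c m m1 \<epsilon>)\<^sup>2) (p * \<kappa> / 2) p u1 v y) \<partial>lborel)"
    (is "_ \<le> ennreal ?K * _")
proof -
  have "?K \<ge> 0"
    by simp
  then have "(\<integral>\<^sup>+y. ennreal (\<bar>G_kernel m m1 \<epsilon> u1 \<theta>1 v y\<bar> powr p / (1 + norm (y - u1)) powr q) \<partial>lborel)
      \<le> (\<integral>\<^sup>+y. ennreal ?K * ennreal (reduced_kernel (p * \<kappa> * (1 + mu_c m m1 \<epsilon>)\<^sup>2) (p * \<kappa> / 2) p u1 v y) \<partial>lborel)"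
    using G_kernel_powr_weighted_le[OF m1 \<theta>1 p q, where m = m and \<epsilon> = \<epsilon> and ?u1.0 = u1 and v = v]
    by (intro nn_integral_mono) (simp add: ennreal_mult'[symmetric] ennreal_leI \<kappa>_def)
  also have "\<dots> = ennreal ?K * (\<integral>\<^sup>+y. ennreal (reduced_kernel (p * \<kappa> * (1 + mu_c m m1 \<epsilon>)\<^sup>2) (p * \<kappa> / 2) p u1 v y) \<partial>lborel)"
    by (rule nn_integral_cmult) measurable
  finally show ?thesis .
qed

theorem lemma3p2:
  fixes m m1 \<epsilon> \<theta>1 p q :: real and u1 :: "real^3"
  assumes "m > 0" "m1 > 0" "0 < \<epsilon>" "\<epsilon> < 1" "\<theta>1 > 0"
    and "0 < p" "p < 3" "q \<ge> 0"
  shows "\<exists>C>0. \<forall>v :: real^3.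
           (\<integral>\<^sup>+ v'. ennreal (\<bar>G_kernel m m1 \<epsilon> u1 \<theta>1 v v'\<bar> powr p
                               / (1 + norm (v' - u1)) powr q) \<partial>lborel)
           \<le> ennreal (C / (1 + norm (v - u1)) powr (q + 1))"
proof -
  define \<kappa> where "\<kappa> = m1 / (8 * \<theta>1)"
  define a where "a = p * \<kappa> * (1 + mu_c m m1 \<epsilon>)\<^sup>2"
  define b where "b = p * \<kappa> / 2"
  define D where "D = sqrt (m1 / (2 * pi * \<theta>1)) powr p * 2 powr q * exp (q\<^sup>2 / b)"
  have "a > 0" "b > 0"
    using assms one_plus_mu_c_pos[of m m1 \<epsilon>] by (simp_all add: a_def b_def \<kappa>_def)
  then obtain C where "0 < C"
    and decay: "\<And>v. (\<integral>\<^sup>+y. ennreal (reduced_kernel a b p u1 v y) \<partial>lborel) \<le> ennreal (C / (1 + norm (v - u1)))"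
    using nn_integral_reduced_kernel_decay[of a b p u1] assms by auto
  have "(\<integral>\<^sup>+y. ennreal (\<bar>G_kernel m m1 \<epsilon> u1 \<theta>1 v y\<bar> powr p / (1 + norm (y - u1)) powr q) \<partial>lborel)
      \<le> ennreal (D * C / (1 + norm (v - u1)) powr (q + 1))" for v
  proof -
    have "(\<integral>\<^sup>+y. ennreal (\<bar>G_kernel m m1 \<epsilon> u1 \<theta>1 v y\<bar> powr p / (1 + norm (y - u1)) powr q) \<partial>lborel)
        \<le> ennreal (D / (1 + norm (v - u1)) powr q) * ennreal (C / (1 + norm (v - u1)))"
      using nn_integral_G_kernel_weighted_le[OF assms(2,5,6,8), of m \<epsilon> u1 v] mult_left_mono[OF decay]
      by (simp add: a_def b_def D_def \<kappa>_def) (meson order_trans zero_le)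
    also have "\<dots> = ennreal (D * C / (1 + norm (v - u1)) powr (q + 1))"
      using \<open>0 < C\<close> by (simp add: D_def ennreal_mult'[symmetric] powr_add add_pos_nonneg)
    finally show ?thesis .
  qed
  then show ?thesis
    using \<open>0 < C\<close> assms by (intro exI[of _ "D * C"]) (simp add: D_def)
qed

end
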